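(* Let $n\in\mathbb{N}$, let $\eta_1,\dots,\eta_{n+1}\in\mathbb{R}^d$ with $\eta_{n+1}=0$ and $\lvert(\nabla_+\eta)_k\rvert=1$ for $1\le k\le n$, and let $w_1,\dots,w_n\ge0$. Let $\alpha_i=\langle(\nabla_+\eta)_{i+1},(\nabla_+\eta)_i\rangle$ for $1\le i\le n-1$. Consider the linear system for $\sigma_1,\dots,\sigma_n$ (with $\sigma_0=0$): $\alpha_k\sigma_{k+1}-2\sigma_k+\alpha_{k-1}\sigma_{k-1}=-\tfrac{1}{n^2}w_k$ for $1\le k\le n-1$ (the term $\alpha_{k-1}\sigma_{k-1}$ being absent for $k=1$), and $\alpha_{n-1}\sigma_{n-1}-\sigma_n=-\tfrac1{n^2}w_n$. Its solution is $\sigma_k=\frac1n\sum_{j=1}^nG_{kj}w_j$, where $G_{kj}=\frac1n\sum_{i=1}^{\min\{j,k\}}\frac{p_{ij}p_{ik}}{\beta_i}$, $p_{ij}=\prod_{m=i}^{j-1}\frac{\alpha_m}{\beta_{m+1}}$ (empty product $=1$), and $\beta_n=1$, $\beta_i=2-\alpha_i^2/\beta_{i+1}$ for $1\le i\le n-1$. Moreover, $\sigma_k>0$ for all $1\le k\le n$ for every choice of $w_1,\dots,w_n\ge0$ not all zero if and only if $\alpha_i>0$ for every $1\le i\le n-1$.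
   Context: For a finite sequence $f$, $(\nabla_+f)_k=n(f_{k+1}-f_k)$. In the chain model one takes $w_j=\lvert(\nabla_+\dot\eta)_j\rvert^2$ (with $\dot\eta_{n+1}=0$), and the system above is the tension (constraint) equation of the chain. *)

theory Defs
  imports "HOL-Analysis.Analysis"
begin

definition nabla_plus :: "nat \<Rightarrow> (nat \<Rightarrow> 'a::real_vector) \<Rightarrow> nat \<Rightarrow> 'a" where
  "nabla_plus n f k = real n *\<^sub>R (f (Suc k) - f k)"

definition chain_alpha :: "nat \<Rightarrow> (nat \<Rightarrow> 'a::real_inner) \<Rightarrow> nat \<Rightarrow> real" where
  "chain_alpha n eta i = inner (nabla_plus n eta (Suc i)) (nabla_plus n eta i)"

text \<open>beta_aux alpha n m = beta_{n-m}: beta_n = 1, beta_i = 2 - alpha_i^2 / beta_{i+1}.\<close>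
fun beta_aux :: "(nat \<Rightarrow> real) \<Rightarrow> nat \<Rightarrow> nat \<Rightarrow> real" where
  "beta_aux alpha n 0 = 1"
| "beta_aux alpha n (Suc m) = 2 - (alpha (n - Suc m))\<^sup>2 / beta_aux alpha n m"

definition chain_beta :: "nat \<Rightarrow> (nat \<Rightarrow> real) \<Rightarrow> nat \<Rightarrow> real" where
  "chain_beta n alpha i = beta_aux alpha n (n - i)"

definition chain_p :: "nat \<Rightarrow> (nat \<Rightarrow> real) \<Rightarrow> nat \<Rightarrow> nat \<Rightarrow> real" where
  "chain_p n alpha i j = (\<Prod>m\<in>{i..<j}. alpha m / chain_beta n alpha (Suc m))"

definition chain_G :: "nat \<Rightarrow> (nat \<Rightarrow> real) \<Rightarrow> nat \<Rightarrow> nat \<Rightarrow> real" where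
  "chain_G n alpha k j = (1 / real n) *
     (\<Sum>i\<in>{1..min j k}. chain_p n alpha i j * chain_p n alpha i k / chain_beta n alpha i)"

definition chain_system :: "nat \<Rightarrow> (nat \<Rightarrow> real) \<Rightarrow> (nat \<Rightarrow> real) \<Rightarrow> (nat \<Rightarrow> real) \<Rightarrow> bool" where
  "chain_system n alpha w sg \<longleftrightarrow>
     (\<forall>k\<in>{1..n-1}. alpha k * sg (Suc k) - 2 * sg k
        + (if k = 1 then 0 else alpha (k - 1) * sg (k - 1)) = - w k / (real n)\<^sup>2)
   \<and> (if n = 1 then 0 else alpha (n - 1) * sg (n - 1)) - sg n = - w n / (real n)\<^sup>2"

end

theory Submission
  imports Defs
begin

text \<open>
  Write c_m = alpha_m / beta_(m+1), so that p_ij is the product of c_i, ..., c_(j-1).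
  The beta-recursion beta_k + c_k alpha_k = 2 factors the tridiagonal tension operator:
  for u_k = beta_k s_k - alpha_(k-1) s_(k-1) (with alpha_0 s_0 = 0), row k of the system is
  equivalent to the backward recurrence u_k = r_k + c_k u_(k+1), and the last row to u_n = r_n,
  where r = w / n^2.  Solving this recurrence gives u_k = sum_(j>=k) p_kj r_j, and solving the
  forward recurrence s_k = u_k / beta_k + c_(k-1) s_(k-1) gives s_k = sum_(i<=k) p_ik u_i / beta_i.
  Exchanging the two sums yields the Green's function G.  All steps are equivalences, so
  together they characterise the solutions of the system exactly, provided no beta vanishes.
  When all |alpha_i| <= 1 (Cauchy-Schwarz for unit vectors) every beta_i is at least 1.  Then
  positive alphas make every G_kj positive, while a non-positive alpha_i makes
  G_(i,i+1) = c_i G_ii non-positive, so the load w = e_(i+1) gives sigma_i <= 0.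
\<close>

lemma backward_recurrence_iff:
  fixes c r x :: "nat \<Rightarrow> 'a::comm_semiring_1"
  assumes "lo \<le> hi"
  shows "(x hi = r hi \<and> (\<forall>k\<in>{lo..<hi}. x k = r k + c k * x (Suc k)))
     \<longleftrightarrow> (\<forall>k\<in>{lo..hi}. x k = (\<Sum>j=k..hi. prod c {k..<j} * r j))"
proof -
  define X where "X k = (\<Sum>j=k..hi. prod c {k..<j} * r j)" for k
  have X_hi: "X hi = r hi"
    by (simp add: X_def)
  have X_step: "X k = r k + c k * X (Suc k)" if "k < hi" for k
  proof -
    have "X k = r k + (\<Sum>j=Suc k..hi. prod c {k..<j} * r j)"
      using that by (simp add: X_def sum.atLeast_Suc_atMost)
    also have "(\<Sum>j=Suc k..hi. prod c {k..<j} * r j) = c k * X (Suc k)"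
      by (simp add: X_def sum_distrib_left prod.atLeast_Suc_lessThan mult.assoc)
    finally show ?thesis .
  qed
  show ?thesis
    unfolding X_def[symmetric]
  proof
    assume rec: "x hi = r hi \<and> (\<forall>k\<in>{lo..<hi}. x k = r k + c k * x (Suc k))"
    have "x k = X k" if "lo \<le> k" "k \<le> hi" for k
      using that(2,1)
    proof (induction rule: inc_induct)
      case base then show ?case using rec X_hi by simp
    next
      case (step m) then show ?case using rec X_step by simp
    qed
    then show "\<forall>k\<in>{lo..hi}. x k = X k" by simp
  qed (use X_hi X_step assms in auto)
qed

lemma forward_recurrence_iff:
  fixes c v y :: "nat \<Rightarrow> 'a::comm_semiring_1"
  assumes "lo \<le> hi"
  shows "(y lo = v lo \<and> (\<forall>k\<in>{lo..<hi}. y (Suc k) = v (Suc k) + c k * y k))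
     \<longleftrightarrow> (\<forall>k\<in>{lo..hi}. y k = (\<Sum>i=lo..k. prod c {i..<k} * v i))"
proof -
  define Y where "Y k = (\<Sum>i=lo..k. prod c {i..<k} * v i)" for k
  have Y_lo: "Y lo = v lo"
    by (simp add: Y_def)
  have Y_step: "Y (Suc k) = v (Suc k) + c k * Y k" if "lo \<le> k" for k
  proof -
    have "Y (Suc k) = (\<Sum>i=lo..k. prod c {i..<Suc k} * v i) + v (Suc k)"
      using that by (simp add: Y_def)
    also have "(\<Sum>i=lo..k. prod c {i..<Suc k} * v i) = c k * Y k"
      by (simp add: Y_def sum_distrib_left prod.atLeastLessThan_Suc mult_ac)
    finally show ?thesis by (simp add: add.commute)
  qed
  show ?thesis
    unfolding Y_def[symmetric]
  proof
    assume rec: "y lo = v lo \<and> (\<forall>k\<in>{lo..<hi}. y (Suc k) = v (Suc k) + c k * y k)"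
    have "y k = Y k" if "lo \<le> k" "k \<le> hi" for k
      using that
    proof (induction rule: dec_induct)
      case base then show ?case using rec Y_lo by simp
    next
      case (step m) then show ?case using rec Y_step by simp
    qed
    then show "\<forall>k\<in>{lo..hi}. y k = Y k" by simp
  qed (use Y_lo Y_step assms in auto)
qed

lemma ball_atLeastAtMost_shift:
  assumes "1 \<le> n"
  shows "(\<forall>k\<in>{1..n}. P k) \<longleftrightarrow> P 1 \<and> (\<forall>k\<in>{1..<n}. P (Suc k))"
proof
  assume "P 1 \<and> (\<forall>k\<in>{1..<n}. P (Suc k))"
  then show "\<forall>k\<in>{1..n}. P k"
    by (metis Suc_pred' atLeastAtMost_iff atLeastLessThan_iff diff_less
        le_neq_implies_less less_one less_le_trans not_less)
qed (use assms in auto)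

lemma triangular_sum_swap:
  fixes f :: "nat \<Rightarrow> nat \<Rightarrow> 'b::comm_monoid_add"
  assumes "k \<le> n"
  shows "(\<Sum>i=1..k. \<Sum>j=i..n. f i j) = (\<Sum>j=1..n. \<Sum>i=1..min j k. f i j)"
proof -
  have "(\<Sum>i=1..k. \<Sum>j=i..n. f i j) = (\<Sum>i=1..k. \<Sum>j\<in>{j. j \<in> {1..n} \<and> i \<le> j}. f i j)"
    by (rule sum.cong) (auto intro: sum.cong)
  also have "\<dots> = (\<Sum>j=1..n. \<Sum>i\<in>{i. i \<in> {1..k} \<and> i \<le> j}. f i j)"
    by (rule sum.swap_restrict) auto
  also have "\<dots> = (\<Sum>j=1..n. \<Sum>i=1..min j k. f i j)"
    by (rule sum.cong) (auto intro: sum.cong)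
  finally show ?thesis .
qed

lemma chain_beta_last: "chain_beta n a n = 1"
  by (simp add: chain_beta_def)

lemma chain_beta_rec:
  assumes "i < n"
  shows "chain_beta n a i = 2 - (a i)\<^sup>2 / chain_beta n a (Suc i)"
proof -
  have "n - i = Suc (n - Suc i)" and "n - Suc (n - Suc i) = i"
    using assms by simp_all
  then show ?thesis
    by (simp add: chain_beta_def)
qed

lemma chain_beta_ge_one:
  assumes small: "\<forall>i\<in>{1..n-1}. (a i)\<^sup>2 \<le> 1" and i: "1 \<le> i" "i \<le> n"
  shows "chain_beta n a i \<ge> 1"
  using i(2,1)
proof (induction rule: inc_induct)
  case base then show ?case by (simp add: chain_beta_last)
next
  case (step m)
  have "(a m)\<^sup>2 \<le> chain_beta n a (Suc m)"
    using small step by force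
  then have "(a m)\<^sup>2 / chain_beta n a (Suc m) \<le> 1"
    using step.IH by (simp add: divide_le_eq)
  then show ?case using step by (simp add: chain_beta_rec)
qed

definition chain_c :: "nat \<Rightarrow> (nat \<Rightarrow> real) \<Rightarrow> nat \<Rightarrow> real" where
  "chain_c n a m = a m / chain_beta n a (Suc m)"

lemma chain_p_prod: "chain_p n a i j = prod (chain_c n a) {i..<j}"
  by (simp add: chain_p_def chain_c_def)

definition chain_lower :: "(nat \<Rightarrow> real) \<Rightarrow> (nat \<Rightarrow> real) \<Rightarrow> nat \<Rightarrow> real" where
  "chain_lower a s k = (if k = 1 then 0 else a (k - 1) * s (k - 1))"

definition chain_u :: "nat \<Rightarrow> (nat \<Rightarrow> real) \<Rightarrow> (nat \<Rightarrow> real) \<Rightarrow> nat \<Rightarrow> real" where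
  "chain_u n a s k = chain_beta n a k * s k - chain_lower a s k"

text \<open>Row k < n of the tension system is the backward step u_k = r + c_k u_(k+1); this is
  where the recursion beta_k + c_k alpha_k = 2 enters.\<close>
lemma tension_row_iff:
  assumes k: "k < n" "1 \<le> k" and beta: "chain_beta n a (Suc k) \<noteq> 0"
  shows "a k * s (Suc k) - 2 * s k + chain_lower a s k = - r
     \<longleftrightarrow> chain_u n a s k = r + chain_c n a k * chain_u n a s (Suc k)"
proof -
  have beta_k: "chain_beta n a k + chain_c n a k * a k = 2"
    using chain_beta_rec[OF k(1)] by (simp add: chain_c_def power2_eq_square)
  have "chain_c n a k * chain_u n a s (Suc k) = a k * s (Suc k) - chain_c n a k * a k * s k"
    using beta k(2) by (simp add: chain_u_def chain_lower_def chain_c_def field_simps)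
  then have "chain_u n a s k - chain_c n a k * chain_u n a s (Suc k)
      = (chain_beta n a k + chain_c n a k * a k) * s k - chain_lower a s k - a k * s (Suc k)"
    by (simp add: chain_u_def algebra_simps)
  then show ?thesis
    unfolding beta_k by linarith
qed

lemma tension_last_iff:
  "chain_lower a s n - s n = - r \<longleftrightarrow> chain_u n a s n = r"
  by (auto simp: chain_u_def chain_beta_last)

lemma chain_system_iff_u:
  assumes n: "1 \<le> n" and beta: "\<forall>i\<in>{1..n}. chain_beta n a i \<noteq> 0"
  shows "chain_system n a w s \<longleftrightarrow>
    (\<forall>k\<in>{1..n}. chain_u n a s k = (\<Sum>j=k..n. chain_p n a k j * (w j / (real n)\<^sup>2)))"
proof -
  define r where "r j = w j / (real n)\<^sup>2" for j
  have beta_Suc: "chain_beta n a (Suc k) \<noteq> 0" if "k < n" for k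
    using beta that by simp
  have "{1..n-1} = {1..<n}"
    using n by auto
  then have "chain_system n a w s \<longleftrightarrow>
      (\<forall>k\<in>{1..<n}. a k * s (Suc k) - 2 * s k + chain_lower a s k = - r k)
      \<and> chain_lower a s n - s n = - r n"
    by (simp add: chain_system_def chain_lower_def r_def)
  also have "\<dots> \<longleftrightarrow> chain_u n a s n = r n
      \<and> (\<forall>k\<in>{1..<n}. chain_u n a s k = r k + chain_c n a k * chain_u n a s (Suc k))"
  proof -
    have "\<forall>k\<in>{1..<n}. (a k * s (Suc k) - 2 * s k + chain_lower a s k = - r k \<longleftrightarrow>
        chain_u n a s k = r k + chain_c n a k * chain_u n a s (Suc k))"
      using tension_row_iff beta_Suc by auto
    then show ?thesis
      using tension_last_iff by blast
  qed
  also have "\<dots> \<longleftrightarrow> (\<forall>k\<in>{1..n}. chain_u n a s k = (\<Sum>j=k..n. chain_p n a k j * r j))"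
    unfolding chain_p_prod by (rule backward_recurrence_iff[OF n])
  finally show ?thesis
    by (simp add: r_def)
qed

lemma chain_u_iff_forward:
  assumes n: "1 \<le> n" and beta: "\<forall>i\<in>{1..n}. chain_beta n a i \<noteq> 0"
  shows "(\<forall>k\<in>{1..n}. chain_u n a s k = U k) \<longleftrightarrow>
    (\<forall>k\<in>{1..n}. s k = (\<Sum>i=1..k. chain_p n a i k * (U i / chain_beta n a i)))"
proof -
  have first: "chain_u n a s 1 = U 1 \<longleftrightarrow> s 1 = U 1 / chain_beta n a 1"
    using beta n by (auto simp: chain_u_def chain_lower_def field_simps)
  have step: "chain_u n a s (Suc k) = U (Suc k) \<longleftrightarrow>
      s (Suc k) = U (Suc k) / chain_beta n a (Suc k) + chain_c n a k * s k"
    if "1 \<le> k" "k < n" for k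
    using beta that by (auto simp: chain_u_def chain_lower_def chain_c_def field_simps)
  have "(\<forall>k\<in>{1..n}. chain_u n a s k = U k) \<longleftrightarrow>
      s 1 = U 1 / chain_beta n a 1 \<and>
      (\<forall>k\<in>{1..<n}. s (Suc k) = U (Suc k) / chain_beta n a (Suc k) + chain_c n a k * s k)"
    unfolding ball_atLeastAtMost_shift[OF n] first using step by auto
  also have "\<dots> \<longleftrightarrow> (\<forall>k\<in>{1..n}. s k = (\<Sum>i=1..k. chain_p n a i k * (U i / chain_beta n a i)))"
    unfolding chain_p_prod by (rule forward_recurrence_iff[OF n])
  finally show ?thesis .
qed

lemma chain_G_expansion:
  assumes "k \<le> n"
  shows "(\<Sum>i=1..k. chain_p n a i k * ((\<Sum>j=i..n. chain_p n a i j * (w j / (real n)\<^sup>2)) / chain_beta n a i))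
    = (1 / real n) * (\<Sum>j=1..n. chain_G n a k j * w j)"
proof -
  have "(\<Sum>i=1..k. chain_p n a i k * ((\<Sum>j=i..n. chain_p n a i j * (w j / (real n)\<^sup>2)) / chain_beta n a i))
      = (\<Sum>i=1..k. \<Sum>j=i..n. chain_p n a i j * chain_p n a i k / chain_beta n a i * w j / (real n)\<^sup>2)"
    by (simp add: sum_distrib_left sum_divide_distrib mult_ac)
  also have "\<dots> = (\<Sum>j=1..n. \<Sum>i=1..min j k. chain_p n a i j * chain_p n a i k / chain_beta n a i * w j / (real n)\<^sup>2)"
    by (rule triangular_sum_swap[OF assms])
  also have "\<dots> = (1 / real n) * (\<Sum>j=1..n. chain_G n a k j * w j)"
    by (simp add: chain_G_def sum_distrib_left sum_distrib_right sum_divide_distrib power2_eq_square mult_ac)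
  finally show ?thesis .
qed

lemma chain_solution_iff:
  assumes n: "1 \<le> n" and beta: "\<forall>i\<in>{1..n}. chain_beta n a i \<noteq> 0"
  shows "chain_system n a w s \<longleftrightarrow>
    (\<forall>k\<in>{1..n}. s k = (1 / real n) * (\<Sum>j\<in>{1..n}. chain_G n a k j * w j))"
  unfolding chain_system_iff_u[OF n beta] chain_u_iff_forward[OF n beta]
proof (intro ball_cong refl)
  fix k assume "k \<in> {1..n}"
  then show "(s k = (\<Sum>i=1..k. chain_p n a i k *
      ((\<Sum>j=i..n. chain_p n a i j * (w j / (real n)\<^sup>2)) / chain_beta n a i)))
    = (s k = (1 / real n) * (\<Sum>j\<in>{1..n}. chain_G n a k j * w j))"
    by (subst chain_G_expansion) auto
qed

lemma chain_p_pos: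
  assumes alpha: "\<forall>i\<in>{1..n-1}. a i > 0" and beta: "\<forall>i\<in>{1..n}. chain_beta n a i > 0"
    and "1 \<le> i" "j \<le> n"
  shows "chain_p n a i j > 0"
  unfolding chain_p_prod chain_c_def
  using assms by (intro prod_pos) force

lemma chain_G_pos:
  assumes alpha: "\<forall>i\<in>{1..n-1}. a i > 0" and beta: "\<forall>i\<in>{1..n}. chain_beta n a i > 0"
    and k: "k \<in> {1..n}" and j: "j \<in> {1..n}"
  shows "chain_G n a k j > 0"
proof -
  have "(\<Sum>i=1..min j k. chain_p n a i j * chain_p n a i k / chain_beta n a i) > 0"
    using k j chain_p_pos[OF alpha beta] beta by (intro sum_pos) auto
  then show ?thesis
    using k by (simp add: chain_G_def)
qed

lemma chain_G_next_diag: "chain_G n a k (Suc k) = chain_c n a k * chain_G n a k k"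
  by (simp add: chain_G_def chain_p_prod prod.atLeastLessThan_Suc sum_distrib_left mult_ac)

text \<open>The diagonal of G is a sum of squares weighted by 1/beta_i, hence nonnegative.\<close>
lemma chain_G_diag_nonneg:
  assumes beta: "\<forall>i\<in>{1..n}. chain_beta n a i > 0" and "k \<le> n"
  shows "chain_G n a k k \<ge> 0"
proof -
  have "chain_p n a i k * chain_p n a i k / chain_beta n a i \<ge> 0" if "i \<in> {1..k}" for i
    using that assms by (simp add: less_imp_le)
  then have "(\<Sum>i=1..k. chain_p n a i k * chain_p n a i k / chain_beta n a i) \<ge> 0"
    by (intro sum_nonneg) blast
  then show ?thesis
    by (simp add: chain_G_def)
qed

lemma chain_solution_pos:
  assumes n: "1 \<le> n" and alpha: "\<forall>i\<in>{1..n-1}. a i > 0"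
    and beta: "\<forall>i\<in>{1..n}. chain_beta n a i > 0"
    and w_nonneg: "\<forall>j\<in>{1..n}. w j \<ge> 0" and j0: "j0 \<in> {1..n}" "w j0 \<noteq> 0"
    and sys: "chain_system n a w s" and k: "k \<in> {1..n}"
  shows "s k > 0"
proof -
  have "s k = (1 / real n) * (\<Sum>j\<in>{1..n}. chain_G n a k j * w j)"
    using sys k chain_solution_iff[OF n] beta by force
  moreover have "(\<Sum>j\<in>{1..n}. chain_G n a k j * w j) > 0"
  proof (rule sum_pos2[OF _ j0(1)])
    show "chain_G n a k j0 * w j0 > 0"
      using chain_G_pos[OF alpha beta k j0(1)] w_nonneg j0 by force
    show "chain_G n a k j * w j \<ge> 0" if "j \<in> {1..n}" for j
      using chain_G_pos[OF alpha beta k that] w_nonneg that by simp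
  qed simp
  ultimately show ?thesis
    using n by simp
qed

text \<open>Necessity: if alpha_i <= 0, the unit load at node i+1 produces sigma_i <= 0.\<close>
lemma chain_solution_nonpos:
  assumes n: "1 \<le> n" and beta: "\<forall>i\<in>{1..n}. chain_beta n a i > 0"
    and i: "i \<in> {1..n-1}" and alpha_i: "a i \<le> 0"
  shows "\<exists>w s. (\<forall>j\<in>{1..n}. w j \<ge> 0) \<and> (\<exists>j\<in>{1..n}. w j \<noteq> 0)
    \<and> chain_system n a w s \<and> s i \<le> 0"
proof -
  define w :: "nat \<Rightarrow> real" where "w j = (if j = Suc i then 1 else 0)" for j
  define s where "s k = (1 / real n) * (\<Sum>j\<in>{1..n}. chain_G n a k j * w j)" for k
  have Suc_i: "Suc i \<in> {1..n}"
    using i by auto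
  have "\<forall>i\<in>{1..n}. chain_beta n a i \<noteq> 0"
    using beta by auto
  then have sys: "chain_system n a w s"
    using chain_solution_iff[OF n, of a w s] by (simp add: s_def)
  have "s i = (1 / real n) * (chain_c n a i * chain_G n a i i)"
    using Suc_i by (simp add: s_def w_def chain_G_next_diag if_distrib cong: if_cong)
  moreover have "chain_c n a i \<le> 0"
    using alpha_i beta Suc_i by (simp add: chain_c_def divide_nonpos_pos)
  moreover have "chain_G n a i i \<ge> 0"
    using chain_G_diag_nonneg[OF beta] i by force
  ultimately have "s i \<le> 0"
    by (simp add: mult_nonpos_nonneg divide_nonpos_nonneg)
  moreover have "\<forall>j\<in>{1..n}. w j \<ge> 0" "\<exists>j\<in>{1..n}. w j \<noteq> 0"
    using Suc_i by (auto simp: w_def)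
  ultimately show ?thesis
    using sys by blast
qed

lemma chain_positivity_iff:
  assumes n: "1 \<le> n" and beta: "\<forall>i\<in>{1..n}. chain_beta n a i > 0"
  shows "(\<forall>w. (\<forall>j\<in>{1..n}. w j \<ge> 0) \<and> (\<exists>j\<in>{1..n}. w j \<noteq> 0) \<longrightarrow>
            (\<forall>s. chain_system n a w s \<longrightarrow> (\<forall>k\<in>{1..n}. s k > 0)))
    \<longleftrightarrow> (\<forall>i\<in>{1..n-1}. a i > 0)"
proof
  assume "\<forall>i\<in>{1..n-1}. a i > 0"
  then show "\<forall>w. (\<forall>j\<in>{1..n}. w j \<ge> 0) \<and> (\<exists>j\<in>{1..n}. w j \<noteq> 0) \<longrightarrow>
      (\<forall>s. chain_system n a w s \<longrightarrow> (\<forall>k\<in>{1..n}. s k > 0))"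
    using chain_solution_pos[OF n _ beta] by blast
next
  assume pos: "\<forall>w. (\<forall>j\<in>{1..n}. w j \<ge> 0) \<and> (\<exists>j\<in>{1..n}. w j \<noteq> 0) \<longrightarrow>
      (\<forall>s. chain_system n a w s \<longrightarrow> (\<forall>k\<in>{1..n}. s k > 0))"
  show "\<forall>i\<in>{1..n-1}. a i > 0"
  proof (rule ballI, rule ccontr)
    fix i assume i: "i \<in> {1..n-1}" and "\<not> a i > 0"
    then obtain w s where "\<forall>j\<in>{1..n}. w j \<ge> 0" "\<exists>j\<in>{1..n}. w j \<noteq> 0"
        "chain_system n a w s" "s i \<le> 0"
      using chain_solution_nonpos[OF n beta i] by force
    moreover have "i \<in> {1..n}"
      using i by auto
    ultimately show False
      using pos by force
  qed
qed

lemma chain_alpha_sq_le_one: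
  assumes unit: "\<forall>k\<in>{1..n}. norm (nabla_plus n eta k) = 1" and i: "i \<in> {1..n-1}"
  shows "(chain_alpha n eta i)\<^sup>2 \<le> 1"
proof -
  have "norm (nabla_plus n eta i) = 1" "norm (nabla_plus n eta (Suc i)) = 1"
    using unit i by auto
  then have "\<bar>chain_alpha n eta i\<bar> \<le> 1"
    using Cauchy_Schwarz_ineq2[of "nabla_plus n eta (Suc i)" "nabla_plus n eta i"]
    by (simp add: chain_alpha_def)
  then show ?thesis
    by (simp add: abs_square_le_1)
qed

theorem proposition3p2:
  fixes n :: nat and eta :: "nat \<Rightarrow> 'a::euclidean_space" and w :: "nat \<Rightarrow> real"
  assumes n_pos: "n \<ge> 1"
    and eta_end: "eta (Suc n) = 0"
    and unit: "\<forall>k\<in>{1..n}. norm (nabla_plus n eta k) = 1"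
    and w_nonneg: "\<forall>j\<in>{1..n}. w j \<ge> 0"
  shows "(\<forall>sg. chain_system n (chain_alpha n eta) w sg \<longleftrightarrow>
            (\<forall>k\<in>{1..n}. sg k =
               (1 / real n) * (\<Sum>j\<in>{1..n}. chain_G n (chain_alpha n eta) k j * w j)))
       \<and> ((\<forall>w'. (\<forall>j\<in>{1..n}. w' j \<ge> 0) \<and> (\<exists>j\<in>{1..n}. w' j \<noteq> 0) \<longrightarrow>
              (\<forall>sg. chain_system n (chain_alpha n eta) w' sg \<longrightarrow>
                 (\<forall>k\<in>{1..n}. sg k > 0)))
          \<longleftrightarrow> (\<forall>i\<in>{1..n-1}. chain_alpha n eta i > 0))"
proof -
  have "\<forall>i\<in>{1..n-1}. (chain_alpha n eta i)\<^sup>2 \<le> 1"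
    using chain_alpha_sq_le_one[OF unit] by blast
  then have beta_pos: "\<forall>i\<in>{1..n}. chain_beta n (chain_alpha n eta) i > 0"
    using chain_beta_ge_one by fastforce
  then have "\<forall>i\<in>{1..n}. chain_beta n (chain_alpha n eta) i \<noteq> 0"
    by auto
  then show ?thesis
    using chain_solution_iff[OF n_pos] chain_positivity_iff[OF n_pos beta_pos] by blast
qed

end
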